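(* In every instance of the Balancing with Friendship game with $m=2$ machines: - every state minimizing the social cost is a strong Nash equilibrium; - every strong Nash equilibrium $\vec s$ satisfies $c(\vec s)\le\frac43c(\vec s^* )$.
   Context: An instance of the Balancing with Friendship (BwF) game consists of: - players $N=\{1,\dots,n\}$; - machines $M=\{1,\dots,m\}$; - a simple undirected graph $G=(N,E)$ (the friendship graph). A state is $\vec s\in M^n$, with $X_k(\vec s)=\{i:s_i=k\}$ and $x_k(\vec s)=|X_k(\vec s)|$. The cost of player $i$ with $s_i=k$ is $x_k(\vec s)$ plus the number of neighbours of $i$ in $G$ not on machine $k$. The social cost is $c(\vec s)=\sum_ic_i(\vec s)$, and $\vec s^*$ minimizes $c$. A state $\vec s$ is a strong Nash equilibrium if for every nonempty coalition $C\subseteq N$ and every joint deviation $\vec s_C'\in M^C$, some $i\in C$ has $c_i(\vec s)\le c_i(\vec s_C',\vec s_{-C})$. *)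

theory Defs
  imports Complex_Main
begin

text \<open>Players are {..<n}, machines are {..<m}
(0-indexed renderings of {1..n}, {1..m}). The friendship graph is a simple undirected
graph on the players, given by a symmetric irreflexive edge relation E on {..<n}.
A state is a function s assigning each player i < n a machine s i < m
(values outside the player set are irrelevant).\<close>

definition simple_graph :: "nat \<Rightarrow> (nat \<Rightarrow> nat \<Rightarrow> bool) \<Rightarrow> bool" where
  "simple_graph n E \<longleftrightarrow>
     (\<forall>i j. E i j \<longrightarrow> i < n \<and> j < n) \<and>
     (\<forall>i j. E i j \<longrightarrow> E j i) \<and>
     (\<forall>i. \<not> E i i)"

definition is_state :: "nat \<Rightarrow> nat \<Rightarrow> (nat \<Rightarrow> nat) \<Rightarrow> bool" where
  "is_state n m s \<longleftrightarrow> (\<forall>i<n. s i < m)"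

definition load :: "nat \<Rightarrow> (nat \<Rightarrow> nat) \<Rightarrow> nat \<Rightarrow> nat" where
  "load n s k = card {i. i < n \<and> s i = k}"

definition player_cost :: "nat \<Rightarrow> (nat \<Rightarrow> nat \<Rightarrow> bool) \<Rightarrow> (nat \<Rightarrow> nat) \<Rightarrow> nat \<Rightarrow> nat" where
  "player_cost n E s i = load n s (s i) + card {j. j < n \<and> E i j \<and> s j \<noteq> s i}"

definition social_cost :: "nat \<Rightarrow> (nat \<Rightarrow> nat \<Rightarrow> bool) \<Rightarrow> (nat \<Rightarrow> nat) \<Rightarrow> nat" where
  "social_cost n E s = (\<Sum>i<n. player_cost n E s i)"

definition social_optimum :: "nat \<Rightarrow> nat \<Rightarrow> (nat \<Rightarrow> nat \<Rightarrow> bool) \<Rightarrow> (nat \<Rightarrow> nat) \<Rightarrow> bool" where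
  "social_optimum n m E s \<longleftrightarrow> is_state n m s \<and>
     (\<forall>s'. is_state n m s' \<longrightarrow> social_cost n E s \<le> social_cost n E s')"

definition deviate :: "nat set \<Rightarrow> (nat \<Rightarrow> nat) \<Rightarrow> (nat \<Rightarrow> nat) \<Rightarrow> (nat \<Rightarrow> nat)" where
  "deviate C t s = (\<lambda>i. if i \<in> C then t i else s i)"

definition strong_NE :: "nat \<Rightarrow> nat \<Rightarrow> (nat \<Rightarrow> nat \<Rightarrow> bool) \<Rightarrow> (nat \<Rightarrow> nat) \<Rightarrow> bool" where
  "strong_NE n m E s \<longleftrightarrow> is_state n m s \<and>
     (\<forall>C t. C \<noteq> {} \<longrightarrow> C \<subseteq> {..<n} \<longrightarrow> (\<forall>i\<in>C. t i < m) \<longrightarrow>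
        (\<exists>i\<in>C. player_cost n E s i \<le> player_cost n E (deviate C t s) i))"

end

theory Submission
  imports Defs
begin

(* The cost of player i is the number of players j (including i itself) that share
   i's machine or are friends of i; so the social cost is a double sum of 0/1 weights.
   With two machines every deviation is described by the set T of players that switch.
   Switching T changes the cost of a switching player i by the sum of the "switch gains"
   g(i,j) over the non-switching j (g = 0 for friends, -1 for a former machine mate,
   +1 otherwise), and changes the social cost by twice the cut value cut(T, U - T).

   (1) If an optimum had a profitable coalitional deviation, the switching players would
       all improve, hence the cut would be negative and the social cost would drop.
   (2) In a strong equilibrium, peeling off non-improving players one at a time shows
       that the potential 2 cut(X, U - X) + cut(X, X) is nonnegative for every X.
       Applied to T and U - T, where T is the set of players on which the state and an
       optimum differ, and combined with the lower bound n^2 <= 2 c(s_opt), this yields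
       3 c(s) <= 4 c(s_opt). *)

definition weight :: "(nat \<Rightarrow> nat \<Rightarrow> bool) \<Rightarrow> (nat \<Rightarrow> nat) \<Rightarrow> nat \<Rightarrow> nat \<Rightarrow> int" where
  "weight E s i j = (if s i = s j \<or> E i j then 1 else 0)"

lemma card_filter_lessThan:
  "int (card {j. j < (n::nat) \<and> P j}) = (\<Sum>j<n. if P j then 1 else 0)"
proof -
  have "{j. j < n \<and> P j} = {j \<in> {..<n}. P j}" by auto
  moreover have "(\<Sum>j<n. if P j then 1 else 0) = (\<Sum>j\<in>{j \<in> {..<n}. P j}. (1::int))"
    by (rule sum.inter_filter[symmetric]) simp
  ultimately show ?thesis by simp
qed

lemma player_cost_weight: "int (player_cost n E s i) = (\<Sum>j<n. weight E s i j)"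
proof -
  have split: "{j. j < n \<and> (s i = s j \<or> E i j)} =
      {j. j < n \<and> s j = s i} \<union> {j. j < n \<and> E i j \<and> s j \<noteq> s i}" by auto
  have "player_cost n E s i = card {j. j < n \<and> (s i = s j \<or> E i j)}"
    unfolding player_cost_def load_def split by (rule card_Un_disjoint[symmetric]) auto
  then show ?thesis unfolding weight_def by (simp add: card_filter_lessThan)
qed

lemma social_cost_weight: "int (social_cost n E s) = (\<Sum>i<n. \<Sum>j<n. weight E s i j)"
  unfolding social_cost_def by (simp add: player_cost_weight)

section \<open>Switching players between the two machines\<close>

text \<open>Change of the weight of the pair (i, j) when exactly one of i, j changes machine.\<close>
definition switch_gain :: "(nat \<Rightarrow> nat \<Rightarrow> bool) \<Rightarrow> (nat \<Rightarrow> nat) \<Rightarrow> nat \<Rightarrow> nat \<Rightarrow> int" where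
  "switch_gain E s i j = (if E i j \<or> i = j then 0 else if s i = s j then -1 else 1)"

definition cut :: "(nat \<Rightarrow> nat \<Rightarrow> bool) \<Rightarrow> (nat \<Rightarrow> nat) \<Rightarrow> nat set \<Rightarrow> nat set \<Rightarrow> int" where
  "cut E s X Y = (\<Sum>i\<in>X. \<Sum>j\<in>Y. switch_gain E s i j)"

definition switched :: "nat \<Rightarrow> (nat \<Rightarrow> nat) \<Rightarrow> (nat \<Rightarrow> nat) \<Rightarrow> nat set" where
  "switched n s s' = {k. k < n \<and> s' k \<noteq> s k}"

lemma switched_subset: "switched n s s' \<subseteq> {..<n}"
  unfolding switched_def by auto

lemma switch_gain_sym: "simple_graph n E \<Longrightarrow> switch_gain E s i j = switch_gain E s j i"
  unfolding switch_gain_def simple_graph_def by auto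

lemma cut_sym: "simple_graph n E \<Longrightarrow> cut E s X Y = cut E s Y X"
  unfolding cut_def by (subst sum.swap) (simp add: switch_gain_sym)

lemma weight_change:
  assumes "is_state n 2 s" "is_state n 2 s'" "i < n" "j < n"
  shows "weight E s' i j - weight E s i j =
    (if (i \<in> switched n s s') = (j \<in> switched n s s') then 0 else switch_gain E s i j)"
proof -
  have "s i < 2" "s j < 2" "s' i < 2" "s' j < 2"
    using assms unfolding is_state_def by auto
  then show ?thesis using assms(3,4) unfolding weight_def switch_gain_def switched_def by auto
qed

lemma player_cost_change:
  assumes "is_state n 2 s" "is_state n 2 s'" "i < n"
  defines "T \<equiv> switched n s s'"
  shows "int (player_cost n E s' i) - int (player_cost n E s i) =
    (\<Sum>j\<in>{j \<in> {..<n}. (i \<in> T) \<noteq> (j \<in> T)}. switch_gain E s i j)"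
proof -
  have "int (player_cost n E s' i) - int (player_cost n E s i) =
      (\<Sum>j<n. weight E s' i j - weight E s i j)"
    by (simp add: player_cost_weight sum_subtractf)
  also have "\<dots> = (\<Sum>j<n. if (i \<in> T) \<noteq> (j \<in> T) then switch_gain E s i j else 0)"
    using weight_change[OF assms(1-3)] unfolding T_def by (intro sum.cong) auto
  also have "\<dots> = (\<Sum>j\<in>{j \<in> {..<n}. (i \<in> T) \<noteq> (j \<in> T)}. switch_gain E s i j)"
    by (rule sum.inter_filter[symmetric]) simp
  finally show ?thesis .
qed

lemma player_cost_change_switched:
  assumes "is_state n 2 s" "is_state n 2 s'" "i \<in> switched n s s'"
  shows "int (player_cost n E s' i) - int (player_cost n E s i) =
    (\<Sum>j\<in>{..<n} - switched n s s'. switch_gain E s i j)"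
proof -
  have "i < n" using assms(3) switched_subset by auto
  moreover have "{j \<in> {..<n}. (i \<in> switched n s s') \<noteq> (j \<in> switched n s s')} =
      {..<n} - switched n s s'" using assms(3) by auto
  ultimately show ?thesis using player_cost_change[OF assms(1,2)] by simp
qed

lemma player_cost_unswitched:
  assumes "is_state n 2 s" "is_state n 2 s'" "i < n" "switched n s s' = {}"
  shows "player_cost n E s' i = player_cost n E s i"
  using player_cost_change[OF assms(1-3), of E] assms(4) by simp

lemma social_cost_change:
  assumes g: "simple_graph n E" and "is_state n 2 s" "is_state n 2 s'"
  defines "T \<equiv> switched n s s'"
  shows "int (social_cost n E s') - int (social_cost n E s) = 2 * cut E s T ({..<n} - T)"
proof -
  have TU: "T \<subseteq> {..<n}" unfolding T_def by (rule switched_subset)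
  have row: "int (player_cost n E s' i) - int (player_cost n E s i) =
      (if i \<in> T then \<Sum>j\<in>{..<n} - T. switch_gain E s i j else \<Sum>j\<in>T. switch_gain E s i j)"
    if "i < n" for i
  proof -
    have "{j \<in> {..<n}. (i \<in> T) \<noteq> (j \<in> T)} = (if i \<in> T then {..<n} - T else T)"
      using TU by auto
    then show ?thesis using player_cost_change[OF assms(2,3) that, of E] unfolding T_def by simp
  qed
  have "int (social_cost n E s') - int (social_cost n E s) =
      (\<Sum>i<n. int (player_cost n E s' i) - int (player_cost n E s i))"
    by (simp add: social_cost_def sum_subtractf)
  also have "\<dots> = (\<Sum>i\<in>{..<n} - T. int (player_cost n E s' i) - int (player_cost n E s i))
      + (\<Sum>i\<in>T. int (player_cost n E s' i) - int (player_cost n E s i))"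
    using TU by (intro sum.subset_diff) auto
  also have "\<dots> = cut E s ({..<n} - T) T + cut E s T ({..<n} - T)"
    unfolding cut_def using TU row by (intro arg_cong2[where f = "(+)"] sum.cong) auto
  also have "\<dots> = 2 * cut E s T ({..<n} - T)"
    using cut_sym[OF g] by simp
  finally show ?thesis .
qed

theorem social_optimum_strong_NE:
  assumes g: "simple_graph n E" and opt: "social_optimum n 2 E s"
  shows "strong_NE n 2 E s"
proof -
  have st: "is_state n 2 s" using opt unfolding social_optimum_def by auto
  have "\<exists>i\<in>C. player_cost n E s i \<le> player_cost n E (deviate C t s) i"
    if C: "C \<noteq> {}" "C \<subseteq> {..<n}" "\<forall>i\<in>C. t i < 2" for C t
  proof (rule ccontr)
    define s' where "s' = deviate C t s"
    define T where "T = switched n s s'"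
    assume "\<not> ?thesis"
    then have improve: "player_cost n E s' i < player_cost n E s i" if "i \<in> C" for i
      using that unfolding s'_def by auto
    have st': "is_state n 2 s'"
      using st C unfolding s'_def deviate_def is_state_def by auto
    have TC: "T \<subseteq> C" unfolding T_def switched_def s'_def deviate_def by auto
    show False
    proof (cases "T = {}")
      case True
      obtain i where i: "i \<in> C" using C by auto
      then have "player_cost n E s' i = player_cost n E s i"
        using player_cost_unswitched[OF st st'] True C unfolding T_def by auto
      then show False using improve[OF i] by simp
    next
      case False
      have "cut E s T ({..<n} - T) =
          (\<Sum>i\<in>T. int (player_cost n E s' i) - int (player_cost n E s i))"
        unfolding cut_def T_def using player_cost_change_switched[OF st st'] by simp
      also have "\<dots> \<le> (\<Sum>i\<in>T. -1)"
        using improve TC by (intro sum_mono) force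
      also have "\<dots> < 0"
        using False finite_subset[OF switched_subset] unfolding T_def by (simp add: card_gt_0_iff)
      finally have "social_cost n E s' < social_cost n E s"
        using social_cost_change[OF g st st'] unfolding T_def by linarith
      then show False using opt st' unfolding social_optimum_def by force
    qed
  qed
  then show ?thesis unfolding strong_NE_def using st by blast
qed

section \<open>A potential that is nonnegative at strong equilibria\<close>

definition potential :: "nat \<Rightarrow> (nat \<Rightarrow> nat \<Rightarrow> bool) \<Rightarrow> (nat \<Rightarrow> nat) \<Rightarrow> nat set \<Rightarrow> int" where
  "potential n E s X = 2 * cut E s X ({..<n} - X) + cut E s X X"

lemma potential_remove:
  assumes g: "simple_graph n E" and X: "X \<subseteq> {..<n}" and i: "i \<in> X"
  shows "potential n E s X =
    potential n E s (X - {i}) + 2 * (\<Sum>j\<in>{..<n} - X. switch_gain E s i j)"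
proof -
  define X' where "X' = X - {i}"
  have fX: "finite X" using X finite_subset by blast
  have X_ins: "X = insert i X'" "i \<notin> X'" "finite X'" using i fX unfolding X'_def by auto
  have comp: "{..<n} - X' = insert i ({..<n} - X)" "i \<notin> {..<n} - X" "finite ({..<n} - X)"
    using X i unfolding X'_def by auto
  have into_i: "(\<Sum>a\<in>X'. switch_gain E s a i) = (\<Sum>j\<in>X'. switch_gain E s i j)"
    using switch_gain_sym[OF g] by simp
  have ii: "switch_gain E s i i = 0" unfolding switch_gain_def by simp
  have "cut E s X ({..<n} - X) = (\<Sum>j\<in>{..<n} - X. switch_gain E s i j) + cut E s X' ({..<n} - X)"
    unfolding cut_def using X_ins by simp
  moreover have "cut E s X' ({..<n} - X') =
      (\<Sum>j\<in>X'. switch_gain E s i j) + cut E s X' ({..<n} - X)"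
    unfolding cut_def comp(1) using comp(2,3) into_i by (simp add: sum.distrib)
  moreover have "cut E s X X = 2 * (\<Sum>j\<in>X'. switch_gain E s i j) + cut E s X' X'"
    unfolding cut_def using X_ins into_i ii by (simp add: sum.distrib)
  ultimately show ?thesis unfolding potential_def X'_def[symmetric] by simp
qed

lemma flip_deviation:
  assumes "is_state n 2 s" "X \<subseteq> {..<n}"
  defines "s' \<equiv> deviate X (\<lambda>i. 1 - s i) s"
  shows "is_state n 2 s'" "switched n s s' = X"
proof -
  have flips: "1 - s k \<noteq> s k" if "k \<in> X" for k
  proof -
    have "s k < 2" using assms(1,2) that unfolding is_state_def by auto
    then show ?thesis by arith
  qed
  show "is_state n 2 s'" using assms(1) unfolding is_state_def s'_def deviate_def by auto
  show "switched n s s' = X"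
    using assms(2) flips unfolding switched_def s'_def deviate_def by auto
qed

text \<open>In a strong equilibrium, the coalition X flipping machines contains a player that does
  not improve; its gain towards the outside is nonnegative, so induction on X applies.\<close>
lemma strong_NE_potential_nonneg:
  assumes g: "simple_graph n E" and ne: "strong_NE n 2 E s" and X: "X \<subseteq> {..<n}"
  shows "0 \<le> potential n E s X"
proof -
  have st: "is_state n 2 s" using ne unfolding strong_NE_def by auto
  have "finite X" using X finite_subset by blast
  then show ?thesis using X
  proof (induction X rule: finite_psubset_induct)
    case (psubset X)
    show ?case
    proof (cases "X = {}")
      case True
      then show ?thesis by (simp add: potential_def cut_def)
    next
      case False
      define t where "t i = 1 - s i" for i
      define s' where "s' = deviate X t s"
      have st': "is_state n 2 s'" and T: "switched n s s' = X"
        using flip_deviation[OF st psubset.prems] unfolding s'_def t_def by auto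
      have "\<forall>i\<in>X. t i < 2" unfolding t_def by auto
      then have "\<exists>i\<in>X. player_cost n E s i \<le> player_cost n E s' i"
        using ne False psubset.prems unfolding strong_NE_def s'_def by blast
      then obtain i where i: "i \<in> X" "player_cost n E s i \<le> player_cost n E s' i" by blast
      have "0 \<le> (\<Sum>j\<in>{..<n} - X. switch_gain E s i j)"
        using player_cost_change_switched[OF st st', of i E] i T by simp
      moreover have "0 \<le> potential n E s (X - {i})"
        using psubset.IH[of "X - {i}"] i(1) psubset.prems by auto
      ultimately show ?thesis using potential_remove[OF g psubset.prems i(1), of s] by linarith
    qed
  qed
qed

text \<open>Internal cuts are bounded by the number of ordered pairs that do not interact,
  which is n^2 minus the social cost.\<close>
lemma internal_cuts_bound:
  assumes T: "T \<subseteq> {..<n}"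
  shows "cut E s T T + cut E s ({..<n} - T) ({..<n} - T) \<le> int n * int n - int (social_cost n E s)"
proof -
  define D where "D X Y = (\<Sum>i\<in>X. \<Sum>j\<in>Y. 1 - weight E s i j)" for X Y
  have cut_le: "cut E s X X \<le> D X X" for X
    unfolding cut_def D_def by (intro sum_mono) (auto simp: switch_gain_def weight_def)
  have mono: "D X Y \<le> D X {..<n}" if "Y \<subseteq> {..<n}" for X Y
    unfolding D_def using that by (intro sum_mono sum_mono2) (auto simp: weight_def)
  have "D {..<n} {..<n} = D ({..<n} - T) {..<n} + D T {..<n}"
    unfolding D_def using T by (intro sum.subset_diff) auto
  moreover have "D {..<n} {..<n} = int n * int n - int (social_cost n E s)"
    unfolding D_def by (simp add: social_cost_weight sum_subtractf)
  moreover have "cut E s T T \<le> D T {..<n}"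
    using cut_le[of T] mono[OF T, of T] by linarith
  moreover have "cut E s ({..<n} - T) ({..<n} - T) \<le> D ({..<n} - T) {..<n}"
    using cut_le[of "{..<n} - T"] mono[of "{..<n} - T" "{..<n} - T"] by auto
  ultimately show ?thesis by linarith
qed

text \<open>With two machines at least half of the ordered pairs share a machine.\<close>
lemma social_cost_lower_bound:
  assumes "is_state n 2 s"
  shows "int n * int n \<le> 2 * int (social_cost n E s)"
proof -
  define v where "v i = (if s i = 0 then 1 else -1 :: int)" for i
  have pair: "v i * v j \<le> 2 * weight E s i j - 1" if "i < n" "j < n" for i j
  proof -
    have "s i < 2" "s j < 2" using assms that unfolding is_state_def by auto
    then show ?thesis unfolding weight_def v_def by auto
  qed
  have "0 \<le> (\<Sum>i<n. v i) * (\<Sum>j<n. v j)" by simp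
  also have "\<dots> = (\<Sum>i<n. \<Sum>j<n. v i * v j)" by (rule sum_product)
  also have "\<dots> \<le> (\<Sum>i<n. \<Sum>j<n. 2 * weight E s i j - 1)" using pair by (intro sum_mono) auto
  also have "\<dots> = 2 * int (social_cost n E s) - int n * int n"
    by (simp add: social_cost_weight sum_subtractf sum_distrib_left)
  finally show ?thesis by simp
qed

theorem strong_NE_price_of_anarchy:
  assumes g: "simple_graph n E" and ne: "strong_NE n 2 E s" and opt: "social_optimum n 2 E sopt"
  shows "3 * int (social_cost n E s) \<le> 4 * int (social_cost n E sopt)"
proof -
  have st: "is_state n 2 s" using ne unfolding strong_NE_def by auto
  have sto: "is_state n 2 sopt" using opt unfolding social_optimum_def by auto
  define T where "T = switched n s sopt"
  define R where "R = {..<n} - T"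
  have TU: "T \<subseteq> {..<n}" unfolding T_def by (rule switched_subset)
  have RT: "{..<n} - R = T" unfolding R_def using TU by auto
  have "0 \<le> potential n E s T" "0 \<le> potential n E s R"
    using strong_NE_potential_nonneg[OF g ne] TU unfolding R_def by auto
  then have "0 \<le> 4 * cut E s T R + cut E s T T + cut E s R R"
    unfolding potential_def RT using cut_sym[OF g, of s R T] unfolding R_def by linarith
  moreover have "int (social_cost n E sopt) - int (social_cost n E s) = 2 * cut E s T R"
    using social_cost_change[OF g st sto] unfolding T_def R_def .
  ultimately show ?thesis
    using internal_cuts_bound[OF TU, of E s] social_cost_lower_bound[OF sto, of E]
    unfolding R_def by linarith
qed

theorem theorem16:
  fixes n :: nat and E :: "nat \<Rightarrow> nat \<Rightarrow> bool"
  assumes "simple_graph n E"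
  shows "(\<forall>s. social_optimum n 2 E s \<longrightarrow> strong_NE n 2 E s) \<and>
         (\<forall>s sopt. strong_NE n 2 E s \<longrightarrow> social_optimum n 2 E sopt \<longrightarrow>
            real (social_cost n E s) \<le> 4 / 3 * real (social_cost n E sopt))"
proof (intro conjI allI impI)
  fix s assume "social_optimum n 2 E s"
  then show "strong_NE n 2 E s" using social_optimum_strong_NE[OF assms] by blast
next
  fix s sopt assume "strong_NE n 2 E s" "social_optimum n 2 E sopt"
  then have "3 * int (social_cost n E s) \<le> 4 * int (social_cost n E sopt)"
    using strong_NE_price_of_anarchy[OF assms] by blast
  then show "real (social_cost n E s) \<le> 4 / 3 * real (social_cost n E sopt)" by linarith
qed

end
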